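(* Let $R$ be a commutative Noetherian ring with unity. The vertex set of $\Gamma_E(R)$ is infinite if and only if there exists $x\in R$ such that $\operatorname{ann}(x)$ is a maximal element of $\mathfrak F=\{\operatorname{ann}(z)\mid 0\neq z\in R\}$ (so $\operatorname{ann}(x)$ is an associated prime of $R$) and $\deg[x]=\infty$.
   Context: For $x,y\in R$ write $x\sim y$ iff $\operatorname{ann}(x)=\operatorname{ann}(y)$; $[x]$ denotes the equivalence class of $x$. Let $Z^*(R)$ be the set of nonzero zero divisors of $R$. The graph $\Gamma_E(R)$ is the simple graph whose vertices are the classes $[x]$ with $x\in Z^*(R)$, two distinct vertices $[x],[y]$ being adjacent iff $xy=0$. The degree of a vertex is the number (possibly infinite) of vertices adjacent to it. An associated prime of $R$ is a prime ideal of the form $\operatorname{ann}(y)$, $y\in R$. *)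

theory Defs
  imports "HOL-Algebra.Ring_Divisibility"
begin

definition ann :: "('a, 'b) ring_scheme \<Rightarrow> 'a \<Rightarrow> 'a set" where
  "ann R x = {y \<in> carrier R. x \<otimes>\<^bsub>R\<^esub> y = \<zero>\<^bsub>R\<^esub>}"

definition zdivs :: "('a, 'b) ring_scheme \<Rightarrow> 'a set" where
  "zdivs R = {x \<in> carrier R. x \<noteq> \<zero>\<^bsub>R\<^esub> \<and>
              (\<exists>y \<in> carrier R. y \<noteq> \<zero>\<^bsub>R\<^esub> \<and> x \<otimes>\<^bsub>R\<^esub> y = \<zero>\<^bsub>R\<^esub>)}"

definition ann_class :: "('a, 'b) ring_scheme \<Rightarrow> 'a \<Rightarrow> 'a set" where
  "ann_class R x = {y \<in> carrier R. ann R y = ann R x}"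

definition GE_vertices :: "('a, 'b) ring_scheme \<Rightarrow> 'a set set" where
  "GE_vertices R = ann_class R ` zdivs R"

definition GE_adj :: "('a, 'b) ring_scheme \<Rightarrow> 'a set \<Rightarrow> 'a set \<Rightarrow> bool" where
  "GE_adj R C D \<longleftrightarrow> C \<in> GE_vertices R \<and> D \<in> GE_vertices R \<and> C \<noteq> D \<and>
     (\<exists>x \<in> C. \<exists>y \<in> D. x \<otimes>\<^bsub>R\<^esub> y = \<zero>\<^bsub>R\<^esub>)"

text \<open>The set of neighbours of a vertex; its degree is infinite iff this set is infinite.\<close>
definition GE_neighbours :: "('a, 'b) ring_scheme \<Rightarrow> 'a set \<Rightarrow> 'a set set" where
  "GE_neighbours R C = {D. GE_adj R C D}"

definition ann_family :: "('a, 'b) ring_scheme \<Rightarrow> 'a set set" where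
  "ann_family R = {ann R z | z. z \<in> carrier R \<and> z \<noteq> \<zero>\<^bsub>R\<^esub>}"

definition maximal_in :: "'c set \<Rightarrow> 'c set set \<Rightarrow> bool" where
  "maximal_in I F \<longleftrightarrow> I \<in> F \<and> (\<forall>J \<in> F. I \<subseteq> J \<longrightarrow> J = I)"

end

theory Submission
  imports Defs
begin

text \<open>Distinct maximal annihilators \<open>ann x \<noteq> ann z\<close> force \<open>x z = 0\<close>: otherwise \<open>ann (x z)\<close>
  is a member of the family containing both of them. Hence the classes of elements with maximal
  annihilator are pairwise adjacent, and if there are infinitely many of them each has infinite
  degree. If there are only finitely many, then, since in a Noetherian ring every annihilator
  lies below a maximal one, every vertex is such a class or a neighbour of one; so an infinite
  vertex set forces one of these finitely many neighbourhoods to be infinite.\<close>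

definition ann_maximal_elems :: "('a, 'b) ring_scheme \<Rightarrow> 'a set" where
  "ann_maximal_elems R = {x \<in> carrier R. maximal_in (ann R x) (ann_family R)}"

context cring
begin

lemma ann_ideal:
  assumes z: "z \<in> carrier R"
  shows "ideal (ann R z) R"
proof (intro idealI subgroup.intro)
  show "ring R" by (rule ring_axioms)
  show "ann R z \<subseteq> carrier (add_monoid R)" by (auto simp: ann_def)
  show "\<And>x y. x \<in> ann R z \<Longrightarrow> y \<in> ann R z \<Longrightarrow> x \<otimes>\<^bsub>add_monoid R\<^esub> y \<in> ann R z"
    using z by (auto simp: ann_def r_distr)
  show "\<one>\<^bsub>add_monoid R\<^esub> \<in> ann R z" using z by (auto simp: ann_def)
  show "\<And>x. x \<in> ann R z \<Longrightarrow> inv\<^bsub>add_monoid R\<^esub> x \<in> ann R z"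
    using z by (auto simp: ann_def simp flip: a_inv_def) (metis r_minus minus_zero)
  show "\<And>a x. a \<in> ann R z \<Longrightarrow> x \<in> carrier R \<Longrightarrow> x \<otimes> a \<in> ann R z"
    using z by (auto simp: ann_def) (metis m_lcomm r_null)
  show "\<And>a x. a \<in> ann R z \<Longrightarrow> x \<in> carrier R \<Longrightarrow> a \<otimes> x \<in> ann R z"
    using z by (auto simp: ann_def) (metis m_assoc l_null)
qed

lemma ann_mult_superset:
  assumes "x \<in> carrier R" "z \<in> carrier R"
  shows "ann R x \<subseteq> ann R (x \<otimes> z)"
  using assms by (auto simp: ann_def) (metis m_assoc m_comm r_null)

lemma ann_family_has_maximal:
  assumes "noetherian_ring R" and I: "I \<in> ann_family R"
  shows "\<exists>x \<in> carrier R. maximal_in (ann R x) (ann_family R) \<and> I \<subseteq> ann R x"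
proof -
  interpret noetherian_ring R by fact
  define A where "A = {J \<in> ann_family R. I \<subseteq> J}"
  have A_ideals: "A \<subseteq> {J. ideal J R}"
    by (auto simp: A_def ann_family_def intro: ann_ideal)
  have "\<exists>M\<in>A. \<forall>J\<in>A. M \<subseteq> J \<longrightarrow> J = M"
  proof (rule subset_Zorn_nonempty)
    show "A \<noteq> {}" using I by (auto simp: A_def)
    fix C assume "C \<noteq> {}" and chain: "subset.chain A C"
    moreover have "subset.chain {J. ideal J R} C"
      using chain A_ideals unfolding pred_on.chain_def by blast
    ultimately have "\<Union>C \<in> C" using ideal_chain_is_trivial by blast
    thus "\<Union>C \<in> A" using chain unfolding pred_on.chain_def by blast
  qed
  then obtain M where M: "M \<in> A" and M_max: "\<forall>J\<in>A. M \<subseteq> J \<longrightarrow> J = M" by blast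
  then obtain x where x: "x \<in> carrier R" and M_eq: "M = ann R x"
    by (auto simp: A_def ann_family_def)
  have "maximal_in M (ann_family R)"
    unfolding maximal_in_def using M M_max by (auto simp: A_def)
  with x M_eq M show ?thesis by (auto simp: A_def)
qed

lemma maximal_ann_nonzero:
  assumes "maximal_in (ann R x) (ann_family R)"
  shows "x \<noteq> \<zero>"
proof
  assume "x = \<zero>"
  from assms obtain z where "z \<in> carrier R" "z \<noteq> \<zero>" "ann R z = ann R x"
    by (auto simp: maximal_in_def ann_family_def)
  with \<open>x = \<zero>\<close> have "\<one> \<in> ann R z" by (auto simp: ann_def)
  with \<open>z \<in> carrier R\<close> \<open>z \<noteq> \<zero>\<close> show False by (simp add: ann_def)
qed

lemma mult_eq_zero_if_maximal_anns_distinct: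
  assumes x: "x \<in> carrier R" and z: "z \<in> carrier R"
    and max_x: "maximal_in (ann R x) (ann_family R)"
    and max_z: "maximal_in (ann R z) (ann_family R)"
    and distinct: "ann R x \<noteq> ann R z"
  shows "x \<otimes> z = \<zero>"
proof (rule ccontr)
  assume "x \<otimes> z \<noteq> \<zero>"
  with x z have F: "ann R (x \<otimes> z) \<in> ann_family R" by (auto simp: ann_family_def)
  have "ann R (x \<otimes> z) = ann R x"
    using max_x F ann_mult_superset[OF x z] by (auto simp: maximal_in_def)
  moreover have "ann R (x \<otimes> z) = ann R z"
    using max_z F ann_mult_superset[OF z x] by (auto simp: maximal_in_def m_comm x z)
  ultimately show False using distinct by simp
qed

lemma ann_class_eq_iff:
  assumes "x \<in> carrier R" "y \<in> carrier R"
  shows "ann_class R x = ann_class R y \<longleftrightarrow> ann R x = ann R y"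
  using assms by (auto simp: ann_class_def)

lemma GE_adj_ann_class:
  assumes x: "x \<in> carrier R" and z: "z \<in> carrier R" and "x \<noteq> \<zero>" "z \<noteq> \<zero>"
    and "x \<otimes> z = \<zero>" and "ann R x \<noteq> ann R z"
  shows "GE_adj R (ann_class R x) (ann_class R z)"
proof -
  have "x \<in> zdivs R" using assms by (auto simp: zdivs_def)
  moreover have "z \<in> zdivs R" using assms by (auto simp: zdivs_def m_comm)
  moreover have "x \<in> ann_class R x" "z \<in> ann_class R z" using x z by (auto simp: ann_class_def)
  moreover have "ann_class R x \<noteq> ann_class R z"
    using assms ann_class_eq_iff[OF x z] by simp
  ultimately show ?thesis
    unfolding GE_adj_def GE_vertices_def using \<open>x \<otimes> z = \<zero>\<close> by blast
qed

lemma GE_neighbours_subset_vertices: "GE_neighbours R C \<subseteq> GE_vertices R"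
  by (auto simp: GE_neighbours_def GE_adj_def)

lemma maximal_classes_subset_GE_neighbours:
  assumes x: "x \<in> carrier R" "maximal_in (ann R x) (ann_family R)"
  shows "ann_class R ` ann_maximal_elems R - {ann_class R x}
           \<subseteq> GE_neighbours R (ann_class R x)"
proof
  fix C assume "C \<in> ann_class R ` ann_maximal_elems R - {ann_class R x}"
  then obtain z where z: "z \<in> carrier R" "maximal_in (ann R z) (ann_family R)"
    and C: "C = ann_class R z" "C \<noteq> ann_class R x" by (auto simp: ann_maximal_elems_def)
  have "ann R x \<noteq> ann R z" using C ann_class_eq_iff[OF x(1) z(1)] by simp
  with x z have "GE_adj R (ann_class R x) C"
    unfolding C(1)
    by (intro GE_adj_ann_class mult_eq_zero_if_maximal_anns_distinct maximal_ann_nonzero)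
  thus "C \<in> GE_neighbours R (ann_class R x)" by (simp add: GE_neighbours_def)
qed

lemma GE_vertices_subset_maximal_stars:
  assumes "noetherian_ring R"
  shows "GE_vertices R \<subseteq> (\<Union>D \<in> ann_class R ` ann_maximal_elems R. insert D (GE_neighbours R D))"
proof
  fix C assume "C \<in> GE_vertices R"
  then obtain y u where C: "C = ann_class R y" and y: "y \<in> carrier R" "y \<noteq> \<zero>"
    and u: "u \<in> carrier R" "u \<noteq> \<zero>" "y \<otimes> u = \<zero>"
    by (auto simp: GE_vertices_def zdivs_def)
  have "ann R u \<in> ann_family R" using u by (auto simp: ann_family_def)
  then obtain x where x: "x \<in> carrier R" "maximal_in (ann R x) (ann_family R)"
    and "ann R u \<subseteq> ann R x"
    using ann_family_has_maximal[OF assms] by blast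
  moreover have "y \<in> ann R u" using u y by (auto simp: ann_def m_comm)
  ultimately have "x \<otimes> y = \<zero>" by (auto simp: ann_def)
  have "C \<in> insert (ann_class R x) (GE_neighbours R (ann_class R x))"
  proof (cases "ann R x = ann R y")
    case True
    thus ?thesis using C ann_class_eq_iff[OF x(1) y(1)] by simp
  next
    case False
    have "GE_adj R (ann_class R x) C"
      unfolding C
      using GE_adj_ann_class[OF x(1) y(1) maximal_ann_nonzero[OF x(2)] y(2) \<open>x \<otimes> y = \<zero>\<close> False] .
    thus ?thesis by (simp add: GE_neighbours_def)
  qed
  with x show "C \<in> (\<Union>D \<in> ann_class R ` ann_maximal_elems R. insert D (GE_neighbours R D))"
    by (auto simp: ann_maximal_elems_def)
qed

end

theorem proposition2p2:
  fixes R :: "('a, 'b) ring_scheme"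
  assumes "cring R" and "noetherian_ring R"
  shows "infinite (GE_vertices R) \<longleftrightarrow>
    (\<exists>x \<in> carrier R. maximal_in (ann R x) (ann_family R) \<and>
                     infinite (GE_neighbours R (ann_class R x)))"
proof
  interpret cring R by fact
  let ?X = "ann_maximal_elems R"
  assume infinite_vertices: "infinite (GE_vertices R)"
  have "\<exists>x \<in> ?X. infinite (GE_neighbours R (ann_class R x))"
  proof (cases "finite (ann_class R ` ?X)")
    case True
    have "infinite (\<Union>D \<in> ann_class R ` ?X. insert D (GE_neighbours R D))"
      using finite_subset[OF GE_vertices_subset_maximal_stars[OF assms(2)]] infinite_vertices
      by blast
    with True show ?thesis by blast
  next
    case False
    then obtain x where x: "x \<in> ?X" by fastforce
    from False have "infinite (ann_class R ` ?X - {ann_class R x})" by simp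
    then have "infinite (GE_neighbours R (ann_class R x))"
      using finite_subset[OF maximal_classes_subset_GE_neighbours] x
      by (auto simp: ann_maximal_elems_def)
    with x show ?thesis by blast
  qed
  then show "\<exists>x \<in> carrier R. maximal_in (ann R x) (ann_family R) \<and>
               infinite (GE_neighbours R (ann_class R x))"
    by (auto simp: ann_maximal_elems_def)
next
  show "\<exists>x \<in> carrier R. maximal_in (ann R x) (ann_family R) \<and>
          infinite (GE_neighbours R (ann_class R x)) \<Longrightarrow> infinite (GE_vertices R)"
    using finite_subset[OF cring.GE_neighbours_subset_vertices[OF assms(1)]] by blast
qed

end
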